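(* Let $P$ be a polyhedral map of genus $g\neq1$ and let $O=\mathrm{GC}(l,0)$ be a Goldberg-Coxeter operation with $l$ a positive integer that is not a multiple of 3. Then $O$ does not increase the symmetry of $P$, i.e. $|\mathrm{Aut}(O(P))|=|\mathrm{Aut}(P)|$.
   Context: A polyhedral map is a 3-connected graph embedded in a closed orientable surface such that every face is an open disc and the closures of any two faces have connected intersection; its genus is that of the surface; $\mathrm{Aut}(P)$ is its automorphism group. Barycentric subdivision $B_P$: add a vertex in every face and on every edge, join each face-vertex to the vertices and edge-vertices on its boundary; colour original vertices 0, edge-vertices 1, face-vertices 2; the triangles are chambers. Goldberg-Coxeter operations: let $T_H$ be the regular hexagonal tiling of the plane with coordinates where $(0,0)$ is the centre of a face $f$, $(0,1)$ is a vertex of $f$ and $(1,0)$ is the vertex of $f$ preceding $(0,1)$ clockwise on its boundary (integer point $(x,y)$ is a face centre iff $x-y\equiv0\pmod3$, a vertex otherwise). For $l\ge1$ and $m\in\{0,l\}$, $\mathrm{GC}(l,m)$ is the coloured triangle cut out of $B_{T_H}$ with corners $v_0=(l,m)$, $v_1=(\frac{l-m}{2},\frac{l+2m}{2})$, $v_2=(0,0)$. It is applied to $P$ by gluing into every chamber of $B_P$ a copy of it or its mirror image (adjacent chambers receiving mirror images), identifying $v_i$ with the colour-$i$ vertex of the chamber and the boundary path between $v_i$ and $v_j$ with the chamber edge between its colour-$i$ and colour-$j$ vertices; the result is the barycentric subdivision of a map $\mathrm{GC}(l,m)(P)$. Each automorphism of $P$ induces one of $\mathrm{GC}(l,m)(P)$,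 so $|\mathrm{Aut}(P)|\le|\mathrm{Aut}(\mathrm{GC}(l,m)(P))|$; the operation increases the symmetry of $P$ if this inequality is strict. *)

theory Defs
  imports Main
begin

text \<open>A map is given by its set of flags (chambers of the barycentric subdivision)
  together with the involutions rf i (i = 0,1,2), where rf i x is the chamber sharing
  with x the side opposite its colour-i vertex.\<close>

record 'a flagmap =
  flags :: "'a set"
  rf :: "nat \<Rightarrow> 'a \<Rightarrow> 'a"

definition step_rel :: "'a flagmap \<Rightarrow> nat set \<Rightarrow> 'a \<Rightarrow> 'a \<Rightarrow> bool" where
  "step_rel M I a b \<longleftrightarrow> (\<exists>i\<in>I. b = rf M i a)"

definition orb :: "'a flagmap \<Rightarrow> nat set \<Rightarrow> 'a \<Rightarrow> 'a set" where
  "orb M I x = {y. (step_rel M I)\<^sup>*\<^sup>* x y}"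

definition is_map :: "'a flagmap \<Rightarrow> bool" where
  "is_map M \<longleftrightarrow> finite (flags M) \<and> flags M \<noteq> {} \<and>
     (\<forall>i<3. \<forall>x\<in>flags M. rf M i x \<in> flags M \<and> rf M i (rf M i x) = x \<and> rf M i x \<noteq> x) \<and>
     (\<forall>x\<in>flags M. rf M 0 (rf M 2 x) = rf M 2 (rf M 0 x) \<and> rf M 0 (rf M 2 x) \<noteq> x) \<and>
     (\<forall>x\<in>flags M. \<forall>y\<in>flags M. (step_rel M {0,1,2})\<^sup>*\<^sup>* x y)"

definition orientable :: "'a flagmap \<Rightarrow> bool" where
  "orientable M \<longleftrightarrow> (\<exists>s :: 'a \<Rightarrow> bool. \<forall>x\<in>flags M. \<forall>i<3. s (rf M i x) \<noteq> s x)"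

definition verts :: "'a flagmap \<Rightarrow> 'a set set" where
  "verts M = orb M {1,2} ` flags M"

definition edges :: "'a flagmap \<Rightarrow> 'a set set" where
  "edges M = orb M {0,2} ` flags M"

definition faces :: "'a flagmap \<Rightarrow> 'a set set" where
  "faces M = orb M {0,1} ` flags M"

definition euler_char :: "'a flagmap \<Rightarrow> int" where
  "euler_char M = int (card (verts M)) - int (card (edges M)) + int (card (faces M))"

definition genus :: "'a flagmap \<Rightarrow> int" where
  "genus M = (2 - euler_char M) div 2"

definition endpts :: "'a flagmap \<Rightarrow> 'a set \<Rightarrow> 'a set set" where
  "endpts M e = orb M {1,2} ` e"

definition connected_sub :: "'a flagmap \<Rightarrow> 'a set set \<Rightarrow> 'a set set \<Rightarrow> bool" where
  "connected_sub M Vs Es \<longleftrightarrow>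
     (\<forall>u\<in>Vs. \<forall>w\<in>Vs. (\<lambda>a b. \<exists>e\<in>Es. endpts M e = {a, b})\<^sup>*\<^sup>* u w)"

definition three_connected :: "'a flagmap \<Rightarrow> bool" where
  "three_connected M \<longleftrightarrow>
     card (verts M) \<ge> 4 \<and>
     (\<forall>e\<in>edges M. card (endpts M e) = 2) \<and>
     inj_on (endpts M) (edges M) \<and>
     (\<forall>S \<subseteq> verts M. card S \<le> 2 \<longrightarrow>
        connected_sub M (verts M - S) {e\<in>edges M. endpts M e \<inter> S = {}})"

text \<open>Closures of any two faces have connected intersection (the intersection of the
  closures consists of the common vertices and common edges).\<close>
definition faces_meet_well :: "'a flagmap \<Rightarrow> bool" where
  "faces_meet_well M \<longleftrightarrow>
     (\<forall>f1\<in>faces M. \<forall>f2\<in>faces M. f1 \<noteq> f2 \<longrightarrow>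
        connected_sub M {v\<in>verts M. v \<inter> f1 \<noteq> {} \<and> v \<inter> f2 \<noteq> {}}
                        {e\<in>edges M. e \<inter> f1 \<noteq> {} \<and> e \<inter> f2 \<noteq> {}})"

definition polyhedral :: "'a flagmap \<Rightarrow> bool" where
  "polyhedral M \<longleftrightarrow> is_map M \<and> orientable M \<and> three_connected M \<and> faces_meet_well M"

definition Aut :: "'a flagmap \<Rightarrow> ('a \<Rightarrow> 'a) set" where
  "Aut M = {\<phi>. bij_betw \<phi> (flags M) (flags M) \<and>
              (\<forall>i<3. \<forall>x\<in>flags M. \<phi> (rf M i x) = rf M i (\<phi> x)) \<and>
              (\<forall>x. x \<notin> flags M \<longrightarrow> \<phi> x = x)}"

text \<open>Integer point (x,y) is a face centre iff x - y = 0 mod 3, otherwise a vertex;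
  the lattice neighbours are +-(1,0), +-(0,1), +-(1,-1).
  A chamber is a triple (F,V,W): F a face centre, V a vertex of F, and W the other end
  of the edge VW of F; its corners are V (colour 0), (V+W)/2 (colour 1), F (colour 2).\<close>

type_synonym pt = "int \<times> int"
type_synonym chamber = "pt \<times> pt \<times> pt"

definition padd :: "pt \<Rightarrow> pt \<Rightarrow> pt" where
  "padd p q = (fst p + fst q, snd p + snd q)"
definition psub :: "pt \<Rightarrow> pt \<Rightarrow> pt" where
  "psub p q = (fst p - fst q, snd p - snd q)"

definition hexface :: "pt \<Rightarrow> bool" where
  "hexface p \<longleftrightarrow> (fst p - snd p) mod 3 = 0"

definition hunit :: "pt \<Rightarrow> bool" where
  "hunit u \<longleftrightarrow> u \<in> {(1,0), (-1,0), (0,1), (0,-1), (1,-1), (-1,1)}"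

definition is_chamber :: "chamber \<Rightarrow> bool" where
  "is_chamber c = (case c of (F, V, W) \<Rightarrow>
      hexface F \<and> hunit (psub V F) \<and> hunit (psub W F) \<and> hunit (psub V W))"

text \<open>Corner of colour i, in doubled coordinates.\<close>
definition corner :: "chamber \<Rightarrow> nat \<Rightarrow> pt" where
  "corner c i = (case c of (F, V, W) \<Rightarrow>
      if i = 0 then padd V V else if i = 1 then padd V W else padd F F)"

definition cref :: "nat \<Rightarrow> chamber \<Rightarrow> chamber" where
  "cref i c = (case c of (F, V, W) \<Rightarrow>
      if i = 0 then (F, W, V)
      else if i = 1 then (F, V, padd (psub V W) F)
      else (psub (padd V W) F, V, W))"

text \<open>Corners of the triangle GC(l,m), in doubled coordinates:
  v0 = (l,m), v1 = ((l-m)/2, (l+2m)/2), v2 = (0,0).\<close>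
definition gc_vtx :: "nat \<Rightarrow> nat \<Rightarrow> nat \<Rightarrow> pt" where
  "gc_vtx l m j = (if j = 0 then (2 * int l, 2 * int m)
                   else if j = 1 then (int l - int m, int l + 2 * int m) else (0, 0))"

definition oth1 :: "nat \<Rightarrow> nat" where "oth1 j = (if j = 0 then 1 else 0)"
definition oth2 :: "nat \<Rightarrow> nat" where "oth2 j = (if j = 2 then 1 else 2)"

definition cross :: "pt \<Rightarrow> pt \<Rightarrow> pt \<Rightarrow> int" where
  "cross a b c = (fst b - fst a) * (snd c - snd a) - (snd b - snd a) * (fst c - fst a)"

text \<open>p lies on the side of the triangle opposite v_j.\<close>
definition on_side :: "nat \<Rightarrow> nat \<Rightarrow> nat \<Rightarrow> pt \<Rightarrow> bool" where
  "on_side l m j p \<longleftrightarrow> cross (gc_vtx l m (oth1 j)) (gc_vtx l m (oth2 j)) p = 0"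

definition in_tri :: "nat \<Rightarrow> nat \<Rightarrow> pt \<Rightarrow> bool" where
  "in_tri l m p \<longleftrightarrow> (\<forall>j<3.
     cross (gc_vtx l m (oth1 j)) (gc_vtx l m (oth2 j)) p *
     cross (gc_vtx l m (oth1 j)) (gc_vtx l m (oth2 j)) (gc_vtx l m j) \<ge> 0)"

definition gc_tri :: "nat \<Rightarrow> nat \<Rightarrow> chamber set" where
  "gc_tri l m = {c. is_chamber c \<and> (\<forall>i<3. in_tri l m (corner c i))}"

text \<open>For a chamber c of the triangle whose side opposite its colour-i corner lies on the
  boundary: the index j of the side of the triangle (opposite v_j) containing it.\<close>
definition gc_side :: "nat \<Rightarrow> nat \<Rightarrow> chamber \<Rightarrow> nat \<Rightarrow> nat" where
  "gc_side l m c i =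
     (if on_side l m 0 (corner c (oth1 i)) \<and> on_side l m 0 (corner c (oth2 i)) then 0
      else if on_side l m 1 (corner c (oth1 i)) \<and> on_side l m 1 (corner c (oth2 i)) then 1
      else 2)"

text \<open>GC(l,m)(M): flags are pairs (chamber of M, chamber of the triangle); adjacent
  chambers of M carry mirror copies, so crossing the boundary side opposite v_j
  goes to the same local chamber in the chamber rf j of M.\<close>
definition GC :: "nat \<Rightarrow> nat \<Rightarrow> 'a flagmap \<Rightarrow> ('a \<times> chamber) flagmap" where
  "GC l m M = \<lparr> flags = flags M \<times> gc_tri l m,
     rf = (\<lambda>i (f, c). if cref i c \<in> gc_tri l m then (f, cref i c)
                      else (rf M (gc_side l m c i) f, c)) \<rparr>"

end

theory Submission
  imports Defs
begin

(*
  Every flag of GC(l,0)(P) is a pair of a flag of P and a chamber of the triangle, its label.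
  For 3 not dividing l, all vertices of GC(l,0)(P) have degree 3 except those in the chamber at
  the corner v0, and all faces are hexagons except those in the chamber at the corner v2; there
  GC(l,0)(P) reproduces the vertices and faces of P.  By Euler's formula a map of genus other
  than 1 cannot have only trivalent vertices and hexagonal faces, so P has an irregular vertex or
  face.  An automorphism of GC(l,0)(P) preserves irregularity, hence fixes the label of the
  corresponding flag, and since adjacency of flags depends only on labels, it fixes all labels
  by connectivity.  A label-preserving automorphism acts by the same permutation of the flags of
  P on every chamber of the triangle, and that permutation is an automorphism of P.
*)

section \<open>Flag maps\<close>

lemma all_less_3: "(\<forall>j<(3::nat). P j) \<longleftrightarrow> P 0 \<and> P 1 \<and> P 2"
  by (auto simp: less_Suc_eq numeral_3_eq_3 numeral_2_eq_2)

lemma ex_less_3: "(\<exists>j<(3::nat). P j) \<longleftrightarrow> P 0 \<or> P 1 \<or> P 2"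
  by (auto simp: less_Suc_eq numeral_3_eq_3 numeral_2_eq_2)

lemma rf_in_flags: "is_map M \<Longrightarrow> x \<in> flags M \<Longrightarrow> i < 3 \<Longrightarrow> rf M i x \<in> flags M"
  and rf_rf: "is_map M \<Longrightarrow> x \<in> flags M \<Longrightarrow> i < 3 \<Longrightarrow> rf M i (rf M i x) = x"
  and rf_0_2_commute: "is_map M \<Longrightarrow> x \<in> flags M \<Longrightarrow> rf M 0 (rf M 2 x) = rf M 2 (rf M 0 x)"
  and rf_0_2_neq: "is_map M \<Longrightarrow> x \<in> flags M \<Longrightarrow> rf M 0 (rf M 2 x) \<noteq> x"
  and flags_connected: "is_map M \<Longrightarrow> x \<in> flags M \<Longrightarrow> y \<in> flags M \<Longrightarrow> (step_rel M {0,1,2})\<^sup>*\<^sup>* x y"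
  unfolding is_map_def by auto

lemma rf_2_0_neq: "is_map M \<Longrightarrow> x \<in> flags M \<Longrightarrow> rf M 2 (rf M 0 x) \<noteq> x"
  by (metis rf_0_2_commute rf_0_2_neq)

lemma rf_inj_iff:
  "is_map M \<Longrightarrow> x \<in> flags M \<Longrightarrow> y \<in> flags M \<Longrightarrow> i < 3 \<Longrightarrow> rf M i x = rf M i y \<longleftrightarrow> x = y"
  by (metis rf_rf)

lemma step_rel_flags_symmetric:
  assumes "is_map M" "I \<subseteq> {0,1,2}" "x \<in> flags M" "step_rel M I x y"
  shows "step_rel M I y x" "y \<in> flags M"
proof -
  obtain i where "i \<in> I" "y = rf M i x" using assms(4) by (auto simp: step_rel_def)
  moreover have "i < 3" using assms(2) \<open>i \<in> I\<close> by auto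
  ultimately show "step_rel M I y x" "y \<in> flags M"
    using assms(1,3) by (auto simp: step_rel_def rf_rf rf_in_flags intro!: bexI[of _ i])
qed

lemma reachable_flags_symmetric:
  assumes "is_map M" "I \<subseteq> {0,1,2}" "x \<in> flags M" "(step_rel M I)\<^sup>*\<^sup>* x y"
  shows "(step_rel M I)\<^sup>*\<^sup>* y x \<and> y \<in> flags M"
  using assms(4)
proof (induction rule: rtranclp_induct)
  case base
  show ?case using assms(3) by simp
next
  case (step y z)
  have "y \<in> flags M" using step.IH ..
  note reverse = step_rel_flags_symmetric[OF assms(1,2) this step.hyps(2)]
  have "(step_rel M I)\<^sup>*\<^sup>* z x"
    using converse_rtranclp_into_rtranclp[of "step_rel M I", OF reverse(1)] step.IH by blast
  with reverse(2) show ?case by blast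
qed

lemma orb_subset_flags:
  assumes "is_map M" "I \<subseteq> {0,1,2}" "x \<in> flags M"
  shows "orb M I x \<subseteq> flags M"
  using reachable_flags_symmetric[OF assms] by (auto simp: orb_def)

lemma orb_eq:
  assumes "is_map M" "I \<subseteq> {0,1,2}" "x \<in> flags M" "y \<in> orb M I x"
  shows "orb M I y = orb M I x"
proof -
  have xy: "(step_rel M I)\<^sup>*\<^sup>* x y" using assms(4) by (simp add: orb_def)
  then have yx: "(step_rel M I)\<^sup>*\<^sup>* y x" using reachable_flags_symmetric[OF assms(1-3)] by blast
  show ?thesis
    unfolding orb_def using rtranclp_trans[OF xy] rtranclp_trans[OF yx] by blast
qed

lemma orb_subset_closed:
  assumes "x \<in> S" "\<And>y i. y \<in> S \<Longrightarrow> i \<in> I \<Longrightarrow> rf M i y \<in> S"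
  shows "orb M I x \<subseteq> S"
proof
  fix z assume "z \<in> orb M I x"
  then have "(step_rel M I)\<^sup>*\<^sup>* x z" by (simp add: orb_def)
  then show "z \<in> S"
    by (induction rule: rtranclp_induct) (use assms in \<open>auto simp: step_rel_def\<close>)
qed

lemma card_flags_eq_card_orbits:
  assumes "is_map M" "I \<subseteq> {0,1,2}" "\<And>x. x \<in> flags M \<Longrightarrow> card (orb M I x) = k"
  shows "card (flags M) = k * card (orb M I ` flags M)"
proof -
  have flags_eq: "\<Union> (orb M I ` flags M) = flags M"
    using orb_subset_flags[OF assms(1,2)] by (auto simp: orb_def)
  have "k * card (orb M I ` flags M) = card (\<Union> (orb M I ` flags M))"
  proof (rule card_partition)
    show "c1 \<inter> c2 = {}" if "c1 \<in> orb M I ` flags M" "c2 \<in> orb M I ` flags M" "c1 \<noteq> c2" for c1 c2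
      using that orb_eq[OF assms(1,2)] by blast
  qed (use assms flags_eq in \<open>auto simp: is_map_def\<close>)
  with flags_eq show ?thesis by simp
qed

section \<open>Dihedral orbits, Euler characteristic and automorphisms\<close>

definition rot :: "'a flagmap \<Rightarrow> nat \<Rightarrow> nat \<Rightarrow> 'a \<Rightarrow> 'a" where
  "rot M i j x = rf M i (rf M j x)"

definition exact_period :: "('a \<Rightarrow> 'a) \<Rightarrow> nat \<Rightarrow> 'a \<Rightarrow> bool" where
  "exact_period f n x \<longleftrightarrow> 0 < n \<and> (f ^^ n) x = x \<and> (\<forall>d. 0 < d \<longrightarrow> d < n \<longrightarrow> (f ^^ d) x \<noteq> x)"

lemma exact_period_2_iff: "exact_period f 2 x \<longleftrightarrow> f (f x) = x \<and> f x \<noteq> x"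
  by (auto simp: exact_period_def numeral_2_eq_2 less_Suc_eq)

lemma exact_period_3_iff: "exact_period f 3 x \<longleftrightarrow> f (f (f x)) = x \<and> f x \<noteq> x"
  by (auto simp: exact_period_def numeral_3_eq_3 less_Suc_eq)

lemma exact_period_6_iff:
  "exact_period f 6 x \<longleftrightarrow> f (f (f (f (f (f x))))) = x \<and> f (f x) \<noteq> x \<and> f (f (f x)) \<noteq> x"
  by (auto simp: exact_period_def eval_nat_numeral less_Suc_eq)

lemma card_funpow_exact_period:
  assumes "exact_period f n x"
  shows "card ((\<lambda>i. (f ^^ i) x) ` {..<n}) = n"
proof -
  have "(f ^^ p) x \<noteq> (f ^^ q) x" if "p < q" "q < n" for p q
  proof
    assume "(f ^^ p) x = (f ^^ q) x"
    then have "(f ^^ (n - q + p)) x = (f ^^ (n - q + q)) x"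
      by (simp add: funpow_add)
    also have "\<dots> = x" using assms that by (simp add: exact_period_def)
    finally show False using assms that by (auto simp: exact_period_def)
  qed
  then have "inj_on (\<lambda>i. (f ^^ i) x) {..<n}"
    by (metis (no_types, lifting) inj_onI lessThan_iff linorder_neqE_nat)
  then show ?thesis by (simp add: card_image)
qed

lemma exact_period_semiconj:
  assumes "x \<in> A" "\<And>z. z \<in> A \<Longrightarrow> g z \<in> A" "\<And>z. z \<in> A \<Longrightarrow> \<pi> (g z) = h (\<pi> z)"
    and "inj_on \<pi> A"
  shows "exact_period h n (\<pi> x) \<longleftrightarrow> exact_period g n x"
proof -
  have in_A: "(g ^^ d) x \<in> A" for d
    by (induction d) (simp_all add: assms(1,2))
  have "(h ^^ d) (\<pi> x) = \<pi> ((g ^^ d) x)" for d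
    by (induction d) (simp_all add: assms(3) in_A)
  moreover have "\<pi> ((g ^^ d) x) = \<pi> x \<longleftrightarrow> (g ^^ d) x = x" for d
    using inj_onD[OF assms(4) _ in_A assms(1)] by auto
  ultimately show ?thesis by (simp add: exact_period_def)
qed

lemma exact_period_Pair_const:
  assumes "\<And>y. g (y, c) = (h y, c)"
  shows "exact_period g n (x, c) \<longleftrightarrow> exact_period h n x"
proof -
  have "exact_period h n (fst (x, c)) \<longleftrightarrow> exact_period g n (x, c)"
    by (rule exact_period_semiconj[where A = "UNIV \<times> {c}"]) (auto simp: assms intro: inj_onI)
  then show ?thesis by simp
qed

lemma funpow_rot_in_flags:
  "is_map M \<Longrightarrow> a < 3 \<Longrightarrow> b < 3 \<Longrightarrow> x \<in> flags M \<Longrightarrow> (rot M a b ^^ i) x \<in> flags M"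
  by (induction i) (auto simp: rot_def rf_in_flags)

lemma orb_rot_eq:
  assumes M: "is_map M" and ab: "a < 3" "b < 3" and x: "x \<in> flags M"
    and period: "(rot M a b ^^ n) x = x" "0 < n"
  defines "R \<equiv> range (\<lambda>i. (rot M a b ^^ i) x)"
  shows "orb M {a,b} x = R \<union> rf M b ` R"
proof
  have rf_b: "rf M b (rf M b y) = y" if "y \<in> R" for y
    using that rf_rf[OF M funpow_rot_in_flags[OF M ab x] ab(2)] by (auto simp: R_def)
  have rf_a: "rf M a y \<in> rf M b ` R" if "y \<in> R" for y
  proof -
    obtain i where "y = (rot M a b ^^ (i + n)) x"
      using \<open>y \<in> R\<close> period(1) by (auto simp: R_def funpow_add)
    moreover obtain j where "i + n = Suc j" using period(2) by (cases "i + n") auto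
    ultimately have "rf M a y = rf M b ((rot M a b ^^ j) x)"
      using rf_rf[OF M rf_in_flags[OF M funpow_rot_in_flags[OF M ab x] ab(2)] ab(1)]
      by (simp add: rot_def)
    then show ?thesis by (auto simp: R_def)
  qed
  have "rf M a (rf M b y) \<in> R" if "y \<in> R" for y
  proof -
    obtain i where "y = (rot M a b ^^ i) x" using \<open>y \<in> R\<close> by (auto simp: R_def)
    then have "rf M a (rf M b y) = (rot M a b ^^ Suc i) x" by (simp add: rot_def)
    then show ?thesis unfolding R_def by (rule range_eqI)
  qed
  then show "orb M {a,b} x \<subseteq> R \<union> rf M b ` R"
    using rf_a rf_b by (intro orb_subset_closed) (auto simp: R_def intro: range_eqI[of _ _ 0])
next
  have reach: "(step_rel M {a,b})\<^sup>*\<^sup>* x ((rot M a b ^^ i) x)" for i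
  proof (induction i)
    case (Suc i)
    let ?y = "(rot M a b ^^ i) x"
    have "step_rel M {a,b} ?y (rf M b ?y)" "step_rel M {a,b} (rf M b ?y) (rf M a (rf M b ?y))"
      by (auto simp: step_rel_def)
    from rtranclp.rtrancl_into_rtrancl[OF rtranclp.rtrancl_into_rtrancl[OF Suc.IH this(1)] this(2)]
    show ?case by (simp add: rot_def[of M a b ?y])
  qed simp
  moreover have "(step_rel M {a,b})\<^sup>*\<^sup>* x (rf M b ((rot M a b ^^ i) x))" for i
    by (rule rtranclp.rtrancl_into_rtrancl[OF reach]) (auto simp: step_rel_def)
  ultimately show "R \<union> rf M b ` R \<subseteq> orb M {a,b} x"
    by (auto simp: R_def orb_def)
qed

lemma card_orb_rot:
  assumes M: "is_map M" "orientable M" and ab: "a < 3" "b < 3" and x: "x \<in> flags M"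
    and period: "exact_period (rot M a b) n x"
  shows "card (orb M {a,b} x) = 2 * n"
proof -
  define R where "R = range (\<lambda>i. (rot M a b ^^ i) x)"
  have R_flags: "R \<subseteq> flags M"
    using funpow_rot_in_flags[OF M(1) ab x] by (auto simp: R_def)
  have "R = (\<lambda>i. (rot M a b ^^ i) x) ` {..<n}"
    using period funpow_mod_eq[where f = "rot M a b" and n = n and x = x]
    by (auto simp: R_def exact_period_def intro!: image_eqI[where x = "_ mod n"])
  then have card_R: "card R = n" and finite_R: "finite R"
    using card_funpow_exact_period[OF period] by simp_all
  have "inj_on (rf M b) R"
    using R_flags rf_inj_iff[OF M(1) _ _ ab(2)] by (simp add: inj_on_def subset_iff)
  then have card_R': "card (rf M b ` R) = n" using card_R by (simp add: card_image)
  obtain sg :: "'a \<Rightarrow> bool" where sg: "\<And>y i. y \<in> flags M \<Longrightarrow> i < 3 \<Longrightarrow> sg (rf M i y) \<noteq> sg y"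
    using M(2) by (auto simp: orientable_def)
  have "sg ((rot M a b ^^ i) x) = sg x" for i
  proof (induction i)
    case (Suc i)
    have "rf M b ((rot M a b ^^ i) x) \<in> flags M"
      using rf_in_flags[OF M(1) funpow_rot_in_flags[OF M(1) ab x] ab(2)] .
    then show ?case
      using Suc sg[OF funpow_rot_in_flags[OF M(1) ab x] ab(2), of i] sg[OF _ ab(1)]
      by (simp add: rot_def[of M a b "(rot M a b ^^ i) x"])
  qed simp
  then have "sg y = sg x" if "y \<in> R" for y
    using that by (auto simp: R_def)
  moreover have "sg (rf M b y) \<noteq> sg y" if "y \<in> R" for y
    using sg[OF _ ab(2)] R_flags that by blast
  ultimately have "R \<inter> rf M b ` R = {}" by blast
  then have "card (R \<union> rf M b ` R) = 2 * n"
    using card_Un_disjoint[OF finite_R finite_imageI[OF finite_R]] card_R card_R' by simp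
  moreover have "orb M {a,b} x = R \<union> rf M b ` R"
    using orb_rot_eq[OF M(1) ab x, of n] period by (simp add: exact_period_def R_def)
  ultimately show ?thesis by simp
qed

lemma exact_period_rot_0_2:
  assumes "is_map M" "x \<in> flags M"
  shows "exact_period (rot M 0 2) 2 x"
proof -
  have "rf M 2 x \<in> flags M" using rf_in_flags[OF assms, of 2] by simp
  then have "rot M 0 2 (rot M 0 2 x) = rf M 0 (rf M 0 (rf M 2 (rf M 2 x)))"
    using assms by (simp add: rot_def rf_0_2_commute)
  then show ?thesis
    using assms by (simp add: exact_period_2_iff rot_def rf_rf rf_in_flags rf_0_2_neq)
qed

lemma genus_eq_1_if_trivalent_hexagonal:
  assumes M: "is_map M" "orientable M"
    and trivalent: "\<And>x. x \<in> flags M \<Longrightarrow> exact_period (rot M 1 2) 3 x"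
    and hexagonal: "\<And>x. x \<in> flags M \<Longrightarrow> exact_period (rot M 0 1) 6 x"
  shows "genus M = 1"
proof -
  have "card (orb M {1,2} x) = 6" "card (orb M {0,2} x) = 4" "card (orb M {0,1} x) = 12"
    if "x \<in> flags M" for x
    using card_orb_rot[OF M _ _ that] trivalent[OF that] hexagonal[OF that]
      exact_period_rot_0_2[OF M(1) that] by fastforce+
  then have "card (flags M) = 6 * card (verts M)" "card (flags M) = 4 * card (edges M)"
    "card (flags M) = 12 * card (faces M)"
    using card_flags_eq_card_orbits[OF M(1)] by (simp_all add: verts_def edges_def faces_def)
  then have "euler_char M = 0" by (simp add: euler_char_def)
  then show ?thesis by (simp add: genus_def)
qed

lemma Aut_in_flags: "\<psi> \<in> Aut M \<Longrightarrow> x \<in> flags M \<Longrightarrow> \<psi> x \<in> flags M"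
  and Aut_rf: "\<psi> \<in> Aut M \<Longrightarrow> x \<in> flags M \<Longrightarrow> i < 3 \<Longrightarrow> \<psi> (rf M i x) = rf M i (\<psi> x)"
  and Aut_inj_iff: "\<psi> \<in> Aut M \<Longrightarrow> x \<in> flags M \<Longrightarrow> y \<in> flags M \<Longrightarrow> \<psi> x = \<psi> y \<longleftrightarrow> x = y"
  by (auto simp: Aut_def bij_betw_def inj_on_def)

lemma Aut_exact_period_iff:
  assumes closed: "\<And>y i. y \<in> flags M \<Longrightarrow> i < 3 \<Longrightarrow> rf M i y \<in> flags M"
    and \<psi>: "\<psi> \<in> Aut M" and ab: "a < 3" "b < 3" and x: "x \<in> flags M"
  shows "exact_period (rot M a b) n (\<psi> x) \<longleftrightarrow> exact_period (rot M a b) n x"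
proof (rule exact_period_semiconj[OF x])
  show "inj_on \<psi> (flags M)" using \<psi> by (simp add: Aut_def bij_betw_def)
qed (simp_all add: rot_def Aut_rf[OF \<psi>] closed ab)

lemma exact_period_rot_swap:
  assumes "is_map M" "i < 3" "j < 3" "x \<in> flags M"
  shows "exact_period (rot M j i) n (rf M i x) \<longleftrightarrow> exact_period (rot M i j) n x"
proof (rule exact_period_semiconj[OF assms(4)])
  show "inj_on (rf M i) (flags M)"
    using rf_inj_iff[OF assms(1) _ _ assms(2)] by (simp add: inj_on_def)
qed (simp_all add: rot_def rf_rf rf_in_flags assms)

section \<open>Chambers of the hexagonal tiling and the triangle of GC(l,0)\<close>

lemma hunit_diff_cases:
  assumes "hunit (x - a, y - (b::int))"
  shows "(x, y) \<in> {(a+1, b), (a-1, b), (a, b+1), (a, b-1), (a+1, b-1), (a-1, b+1)}"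
  using assms by (auto simp: hunit_def algebra_simps)

lemma chamber_cases:
  assumes "is_chamber c"
  obtains a b where "(a - b) mod 3 = 0" "c = ((a,b), (a+1,b-1), (a+1,b))"
    | a b where "(a - b) mod 3 = 0" "c = ((a,b), (a+1,b-1), (a,b-1))"
    | a b where "(a - b) mod 3 = 0" "c = ((a,b), (a+1,b), (a,b+1))"
    | a b where "(a - b) mod 3 = 0" "c = ((a,b), (a+1,b), (a+1,b-1))"
    | a b where "(a - b) mod 3 = 0" "c = ((a,b), (a,b+1), (a-1,b+1))"
    | a b where "(a - b) mod 3 = 0" "c = ((a,b), (a,b+1), (a+1,b))"
    | a b where "(a - b) mod 3 = 0" "c = ((a,b), (a-1,b+1), (a-1,b))"
    | a b where "(a - b) mod 3 = 0" "c = ((a,b), (a-1,b+1), (a,b+1))"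
    | a b where "(a - b) mod 3 = 0" "c = ((a,b), (a-1,b), (a,b-1))"
    | a b where "(a - b) mod 3 = 0" "c = ((a,b), (a-1,b), (a-1,b+1))"
    | a b where "(a - b) mod 3 = 0" "c = ((a,b), (a,b-1), (a+1,b-1))"
    | a b where "(a - b) mod 3 = 0" "c = ((a,b), (a,b-1), (a-1,b))"
proof -
  obtain a b v1 v2 w1 w2 where c: "c = ((a,b), (v1,v2), (w1,w2))"
    by (metis prod.exhaust)
  have "(a - b) mod 3 = 0" "hunit (v1 - a, v2 - b)" "hunit (w1 - a, w2 - b)" "hunit (v1 - w1, v2 - w2)"
    using assms by (simp_all add: c is_chamber_def hexface_def psub_def)
  note h = this
  from hunit_diff_cases[OF h(2)] hunit_diff_cases[OF h(3)] h(4)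
  have "c = ((a,b), (a+1,b-1), (a+1,b)) \<or> c = ((a,b), (a+1,b-1), (a,b-1)) \<or>
      c = ((a,b), (a+1,b), (a,b+1)) \<or> c = ((a,b), (a+1,b), (a+1,b-1)) \<or>
      c = ((a,b), (a,b+1), (a-1,b+1)) \<or> c = ((a,b), (a,b+1), (a+1,b)) \<or>
      c = ((a,b), (a-1,b+1), (a-1,b)) \<or> c = ((a,b), (a-1,b+1), (a,b+1)) \<or>
      c = ((a,b), (a-1,b), (a,b-1)) \<or> c = ((a,b), (a-1,b), (a-1,b+1)) \<or>
      c = ((a,b), (a,b-1), (a+1,b-1)) \<or> c = ((a,b), (a,b-1), (a-1,b))"
    unfolding c insert_iff singleton_iff by (elim disjE; simp add: hunit_def)
  then show thesis
    by (elim disjE) (erule that[OF h(1)])+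
qed

lemma cref_cref [simp]: "cref i (cref i c) = c"
  by (cases c) (auto simp: cref_def padd_def psub_def)

lemma is_chamber_cref:
  assumes "is_chamber c"
  shows "is_chamber (cref i c)"
  using assms
  by (cases rule: chamber_cases)
    (simp_all add: cref_def is_chamber_def padd_def psub_def hunit_def hexface_def)

lemma vertex_cref: "i \<noteq> 0 \<Longrightarrow> fst (snd (cref i c)) = fst (snd c)"
  by (cases c) (simp add: cref_def)

lemma face_cref: "i < 2 \<Longrightarrow> fst (cref i c) = fst c"
  by (cases c) (simp add: cref_def)

lemma vertex_not_face:
  assumes "is_chamber c" "fst (snd c) = (x, y)"
  shows "(x - y) mod 3 \<noteq> 0"
  using assms by (cases rule: chamber_cases) (simp_all, presburger+)

lemma face_coords_mod_3:
  assumes "is_chamber c" "fst c = (x, y)"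
  shows "(x - y) mod 3 = 0"
  using assms by (cases rule: chamber_cases) simp_all

lemma chamber_vertex_rotation_period:
  assumes "is_chamber c"
  shows "exact_period (\<lambda>c. cref 1 (cref 2 c)) 3 c"
  using assms by (cases rule: chamber_cases) (simp_all add: exact_period_3_iff cref_def padd_def psub_def)

lemma chamber_face_rotation_period:
  assumes "is_chamber c"
  shows "exact_period (\<lambda>c. cref 0 (cref 1 c)) 6 c"
  using assms by (cases rule: chamber_cases) (simp_all add: exact_period_6_iff cref_def padd_def psub_def)

lemma in_tri_GC_l_0:
  assumes "l \<ge> 1"
  shows "in_tri l 0 (x, y) \<longleftrightarrow> 0 \<le> y \<and> y \<le> x \<and> x + y \<le> 2 * int l"
proof -
  have "in_tri l 0 (x, y) \<longleftrightarrow> 0 \<le> (x - y) * (2 * int l ^ 3) \<and> 0 \<le> y * (4 * int l ^ 3)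
      \<and> 0 \<le> (2 * int l - x - y) * (2 * int l ^ 3)"
    by (simp add: in_tri_def all_less_3 oth1_def oth2_def cross_def gc_vtx_def algebra_simps power3_eq_cube)
  also have "\<dots> \<longleftrightarrow> 0 \<le> y \<and> y \<le> x \<and> x + y \<le> 2 * int l"
    using assms by (auto simp: zero_le_mult_iff)
  finally show ?thesis .
qed

lemma on_side_GC_l_0:
  assumes "l \<ge> 1"
  shows "on_side l 0 0 (x, y) \<longleftrightarrow> x = y"
    and "on_side l 0 (Suc 0) (x, y) \<longleftrightarrow> y = 0"
    and "on_side l 0 2 (x, y) \<longleftrightarrow> x + y = 2 * int l"
proof -
  have "on_side l 0 2 (x, y) \<longleftrightarrow> int l * (2 * int l - x - y) = 0"
    by (simp add: on_side_def oth1_def oth2_def cross_def gc_vtx_def algebra_simps)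
  then show "on_side l 0 2 (x, y) \<longleftrightarrow> x + y = 2 * int l" using assms by auto
qed (use assms in \<open>auto simp: on_side_def oth1_def oth2_def cross_def gc_vtx_def algebra_simps\<close>)

lemma mem_gc_tri_l_0:
  assumes "l \<ge> 1"
  shows "((f1, f2), (v1, v2), (w1, w2)) \<in> gc_tri l 0 \<longleftrightarrow> is_chamber ((f1, f2), (v1, v2), (w1, w2)) \<and>
    0 \<le> f2 \<and> f2 \<le> f1 \<and> f1 + f2 \<le> int l \<and> 0 \<le> v2 \<and> v2 \<le> v1 \<and> v1 + v2 \<le> int l \<and>
    0 \<le> v2 + w2 \<and> v2 + w2 \<le> v1 + w1 \<and> v1 + w1 + v2 + w2 \<le> 2 * int l"
  using assms by (auto simp: gc_tri_def all_less_3 corner_def padd_def in_tri_GC_l_0)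

lemma gc_tri_corner_bounds:
  assumes "l \<ge> 1" "c \<in> gc_tri l 0"
  shows "fst c = (x, y) \<Longrightarrow> 0 \<le> y \<and> y \<le> x \<and> x + y \<le> int l"
    and "fst (snd c) = (x, y) \<Longrightarrow> 0 \<le> y \<and> y \<le> x \<and> x + y \<le> int l"
  using assms by (cases c, auto simp: mem_gc_tri_l_0)+

lemma interior_vertex_in_gc_tri:
  assumes "l \<ge> 1" "is_chamber c" "fst (snd c) = (x, y)" "0 < y" "y < x" "x + y < int l"
  shows "c \<in> gc_tri l 0"
  using assms(2) by (cases rule: chamber_cases) (use assms in \<open>(auto simp: mem_gc_tri_l_0), presburger+\<close>)

lemma interior_face_in_gc_tri:
  assumes "l \<ge> 1" "is_chamber c" "fst c = (x, y)" "0 < y" "y + 3 \<le> x" "x + y < int l"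
  shows "c \<in> gc_tri l 0"
  using assms(2) by (cases rule: chamber_cases) (use assms in \<open>auto simp: mem_gc_tri_l_0\<close>)

definition chamber_v2 :: chamber where
  "chamber_v2 = ((0, 0), (1, 0), (0, 1))"

(* Since 3 does not divide l, the corner v0 = (l, 0) is a vertex of the tiling, and it lies in a
   single chamber of the triangle. *)
definition chamber_v0 :: "nat \<Rightarrow> chamber" where
  "chamber_v0 l = (if int l mod 3 = 1 then ((int l - 1, 0), (int l, 0), (int l - 1, 1))
                   else ((int l - 1, 1), (int l, 0), (int l - 1, 0)))"

lemma chamber_v2_in_gc_tri: "l \<ge> 1 \<Longrightarrow> chamber_v2 \<in> gc_tri l 0"
  by (simp add: chamber_v2_def mem_gc_tri_l_0 is_chamber_def hexface_def hunit_def psub_def)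

lemma chamber_v2_boundary:
  assumes "l \<ge> 1"
  shows "cref 0 chamber_v2 \<notin> gc_tri l 0" "gc_side l 0 chamber_v2 0 = 0"
    and "cref 1 chamber_v2 \<notin> gc_tri l 0" "gc_side l 0 chamber_v2 1 = 1"
  using assms
  by (simp_all add: chamber_v2_def mem_gc_tri_l_0 cref_def padd_def psub_def gc_side_def corner_def
      on_side_GC_l_0 oth1_def oth2_def)

lemma chamber_v0_in_gc_tri: "l \<ge> 1 \<Longrightarrow> \<not> 3 dvd l \<Longrightarrow> chamber_v0 l \<in> gc_tri l 0"
  by (auto simp: chamber_v0_def mem_gc_tri_l_0 is_chamber_def hexface_def hunit_def psub_def; presburger)

lemma chamber_v0_boundary:
  assumes "l \<ge> 1" "\<not> 3 dvd l"
  shows "cref 1 (chamber_v0 l) \<notin> gc_tri l 0" "cref 2 (chamber_v0 l) \<notin> gc_tri l 0"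
    and "gc_side l 0 (chamber_v0 l) 1 = (if int l mod 3 = 1 then 1 else 2)"
    and "gc_side l 0 (chamber_v0 l) 2 = (if int l mod 3 = 1 then 2 else 1)"
proof -
  have "int l mod 3 = 1 \<or> int l mod 3 = 2" using assms(2) by presburger
  then show "cref 1 (chamber_v0 l) \<notin> gc_tri l 0" "cref 2 (chamber_v0 l) \<notin> gc_tri l 0"
    "gc_side l 0 (chamber_v0 l) 1 = (if int l mod 3 = 1 then 1 else 2)"
    "gc_side l 0 (chamber_v0 l) 2 = (if int l mod 3 = 1 then 2 else 1)"
    using assms(1)
    by (auto simp: chamber_v0_def mem_gc_tri_l_0 cref_def padd_def psub_def gc_side_def corner_def
        on_side_GC_l_0 oth1_def oth2_def)
qed

lemma chamber_v2_unique:
  assumes "l \<ge> 1" "c \<in> gc_tri l 0" "fst c = (0, 0)"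
  shows "c = chamber_v2"
proof -
  have "is_chamber c" using assms(2) by (simp add: gc_tri_def)
  then show ?thesis
    using assms by (cases rule: chamber_cases) (auto simp: mem_gc_tri_l_0 chamber_v2_def)
qed

lemma chamber_v0_unique:
  assumes "l \<ge> 1" "\<not> 3 dvd l" "c \<in> gc_tri l 0" "fst (snd c) = (int l, 0)"
  shows "c = chamber_v0 l"
proof -
  have "is_chamber c" using assms(3) by (simp add: gc_tri_def)
  moreover have "int l mod 3 = 1 \<or> int l mod 3 = 2" using assms(2) by presburger
  ultimately show ?thesis
    using assms by (cases rule: chamber_cases) ((auto simp: mem_gc_tri_l_0 chamber_v0_def), presburger+)
qed

(* The squared Euclidean length of (x, y) in the lattice basis, whose vectors meet at 60 degrees. *)
definition sqnorm :: "pt \<Rightarrow> int" where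
  "sqnorm p = fst p * fst p + fst p * snd p + snd p * snd p"

definition corner_sqnorm :: "chamber \<Rightarrow> int" where
  "corner_sqnorm c = sqnorm (corner c 0) + sqnorm (corner c 1) + sqnorm (corner c 2)"

lemma corner_sqnorm_nonneg: "corner_sqnorm c \<ge> 0"
proof -
  have "2 * sqnorm p = fst p * fst p + snd p * snd p + (fst p + snd p) * (fst p + snd p)" for p
    by (simp add: sqnorm_def algebra_simps)
  moreover have "fst p * fst p + snd p * snd p + (fst p + snd p) * (fst p + snd p) \<ge> 0" for p :: pt
    by simp
  ultimately have "sqnorm p \<ge> 0" for p by (metis zero_le_double_add_iff_zero_le_single_add mult_2)
  then show ?thesis by (simp add: corner_sqnorm_def)
qed

lemma gc_tri_descent:
  assumes l: "l \<ge> 1" and c: "c \<in> gc_tri l 0" and "c \<noteq> chamber_v2"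
  shows "\<exists>i<3. cref i c \<in> gc_tri l 0 \<and> corner_sqnorm (cref i c) < corner_sqnorm c"
proof -
  obtain f1 f2 V W where c_eq: "c = ((f1, f2), V, W)" by (metis prod.exhaust)
  have "is_chamber c" using c by (simp add: gc_tri_def)
  moreover have "f2 \<le> f1" "(f1 - f2) mod 3 = 0"
    using c \<open>is_chamber c\<close> l unfolding c_eq
    by (cases V, cases W, simp add: mem_gc_tri_l_0, simp add: is_chamber_def hexface_def)
  then have "f1 = f2 \<or> f2 + 3 \<le> f1" by presburger
  ultimately show ?thesis
    using assms is_chamber_cref[OF \<open>is_chamber c\<close>, of 0] is_chamber_cref[OF \<open>is_chamber c\<close>, of 1]
      is_chamber_cref[OF \<open>is_chamber c\<close>, of 2] unfolding c_eq
    by (cases rule: chamber_cases)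
      (auto simp add: ex_less_3 mem_gc_tri_l_0 chamber_v2_def cref_def padd_def psub_def
        corner_sqnorm_def sqnorm_def corner_def algebra_simps)
qed

lemma gc_tri_invariant_iff:
  assumes l: "l \<ge> 1" and c: "c \<in> gc_tri l 0"
    and invariant: "\<And>c i. c \<in> gc_tri l 0 \<Longrightarrow> i < 3 \<Longrightarrow> cref i c \<in> gc_tri l 0 \<Longrightarrow> Q c \<Longrightarrow> Q (cref i c)"
  shows "Q c \<longleftrightarrow> Q chamber_v2"
  using c
proof (induction "nat (corner_sqnorm c)" arbitrary: c rule: less_induct)
  case less
  show ?case
  proof (cases "c = chamber_v2")
    case False
    then obtain i where i: "i < 3" "cref i c \<in> gc_tri l 0" "corner_sqnorm (cref i c) < corner_sqnorm c"
      using gc_tri_descent[OF l less.prems] by blast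
    then have "Q (cref i c) \<longleftrightarrow> Q chamber_v2"
      using less.hyps corner_sqnorm_nonneg[of "cref i c"] by simp
    moreover have "Q (cref i c) \<longleftrightarrow> Q c"
      using invariant[OF less.prems i(1,2)] invariant[OF i(2) i(1)] less.prems by auto
    ultimately show ?thesis by simp
  qed simp
qed

section \<open>Vertices and faces of GC(l,0)(P)\<close>

lemma rf_GC: "rf (GC l m P) i (f, c) =
    (if cref i c \<in> gc_tri l m then (f, cref i c) else (rf P (gc_side l m c i) f, c))"
  by (simp add: GC_def)

lemma flags_GC: "flags (GC l m P) = flags P \<times> gc_tri l m"
  by (simp add: GC_def)

lemma rf_GC_in_flags:
  assumes "is_map P" "x \<in> flags (GC l m P)" "i < 3"
  shows "rf (GC l m P) i x \<in> flags (GC l m P)"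
proof -
  have "gc_side l m c i < 3" for c by (simp add: gc_side_def)
  then show ?thesis using assms by (cases x) (auto simp: rf_GC flags_GC rf_in_flags)
qed

lemma exact_period_rot_GC_inside:
  assumes "c \<in> C" "C \<subseteq> gc_tri l m"
    and closed: "\<And>c'. c' \<in> C \<Longrightarrow> cref j c' \<in> C" "\<And>c'. c' \<in> C \<Longrightarrow> cref i c' \<in> C"
  shows "exact_period (rot (GC l m P) i j) n (f, c) \<longleftrightarrow> exact_period (\<lambda>c. cref i (cref j c)) n c"
proof -
  have rot_eq: "rot (GC l m P) i j (f, c') = (f, cref i (cref j c'))" if "c' \<in> C" for c'
  proof -
    have "cref j c' \<in> gc_tri l m" "cref i (cref j c') \<in> gc_tri l m"
      using closed[OF that] closed(2)[OF closed(1)[OF that]] assms(2) by auto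
    then show ?thesis by (simp add: rot_def rf_GC)
  qed
  have "exact_period (\<lambda>c. cref i (cref j c)) n (snd (f, c)) \<longleftrightarrow> exact_period (rot (GC l m P) i j) n (f, c)"
  proof (rule exact_period_semiconj[where A = "{f} \<times> C"])
    show "(f, c) \<in> {f} \<times> C" using assms(1) by simp
    show "rot (GC l m P) i j z \<in> {f} \<times> C" "snd (rot (GC l m P) i j z) = cref i (cref j (snd z))"
      if "z \<in> {f} \<times> C" for z
      using that rot_eq closed by (cases z, simp)+
    show "inj_on snd ({f} \<times> C)" by (auto intro: inj_onI)
  qed
  then show ?thesis by simp
qed

lemma trivalent_GC_interior:
  assumes "l \<ge> 1" "c \<in> gc_tri l 0" "fst (snd c) = (x, y)" "0 < y" "y < x" "x + y < int l"
  shows "exact_period (rot (GC l 0 P) 1 2) 3 (f, c)"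
proof -
  have "is_chamber c" using assms(2) by (simp add: gc_tri_def)
  then have "exact_period (\<lambda>c. cref 1 (cref 2 c)) 3 c"
    by (rule chamber_vertex_rotation_period)
  moreover have "{c'. is_chamber c' \<and> fst (snd c') = (x, y)} \<subseteq> gc_tri l 0"
    using interior_vertex_in_gc_tri[OF assms(1) _ _ assms(4-6)] by blast
  ultimately show ?thesis
    using \<open>is_chamber c\<close> assms(3)
    by (subst exact_period_rot_GC_inside[where C = "{c'. is_chamber c' \<and> fst (snd c') = (x, y)}"])
      (simp_all add: is_chamber_cref vertex_cref)
qed

lemma hexagonal_GC_interior:
  assumes "l \<ge> 1" "c \<in> gc_tri l 0" "fst c = (x, y)" "0 < y" "y + 3 \<le> x" "x + y < int l"
  shows "exact_period (rot (GC l 0 P) 0 1) 6 (f, c)"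
proof -
  have "is_chamber c" using assms(2) by (simp add: gc_tri_def)
  then have "exact_period (\<lambda>c. cref 0 (cref 1 c)) 6 c"
    by (rule chamber_face_rotation_period)
  moreover have "{c'. is_chamber c' \<and> fst c' = (x, y)} \<subseteq> gc_tri l 0"
    using interior_face_in_gc_tri[OF assms(1) _ _ assms(4-6)] by blast
  ultimately show ?thesis
    using \<open>is_chamber c\<close> assms(3)
    by (subst exact_period_rot_GC_inside[where C = "{c'. is_chamber c' \<and> fst c' = (x, y)}"])
      (simp_all add: is_chamber_cref face_cref)
qed

(* Near the boundary the walk around a vertex or face continues in mirrored copies of the
   triangle; these cases are checked chamber by chamber, after fixing the residues of the
   coordinates mod 3 so that the simplifier can decide which chambers exist. *)
lemmas walk_simps = exact_period_3_iff exact_period_6_iff rot_def rf_GC mem_gc_tri_l_0 cref_def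
  padd_def psub_def is_chamber_def hexface_def hunit_def gc_side_def corner_def on_side_GC_l_0
  oth1_def oth2_def rf_rf rf_in_flags rf_0_2_commute rf_0_2_neq rf_2_0_neq

lemma trivalent_GC_side_1:
  assumes "l \<ge> 1" "is_map P" "f \<in> flags P" "c \<in> gc_tri l 0" "fst (snd c) = (x, 0)" "x < int l"
  shows "exact_period (rot (GC l 0 P) 1 2) 3 (f, c)"
proof -
  have "is_chamber c" using assms(4) by (simp add: gc_tri_def)
  moreover have "\<exists>k. x = 3 * k + 1 \<or> x = 3 * k + 2"
    using vertex_not_face[OF \<open>is_chamber c\<close> assms(5)] by presburger
  then obtain k where "x = 3 * k + 1 \<or> x = 3 * k + 2" by blast
  ultimately show ?thesis
    using assms by (cases rule: chamber_cases) ((auto simp: walk_simps), presburger+)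
qed

lemma trivalent_GC_side_2:
  assumes "l \<ge> 1" "is_map P" "f \<in> flags P" "c \<in> gc_tri l 0" "fst (snd c) = (x, y)"
    "x + y = int l" "0 < y"
  shows "exact_period (rot (GC l 0 P) 1 2) 3 (f, c)"
proof -
  have "is_chamber c" using assms(4) by (simp add: gc_tri_def)
  moreover have "\<exists>k. x = y + 3 * k + 1 \<or> x = y + 3 * k + 2"
    using vertex_not_face[OF \<open>is_chamber c\<close> assms(5)] by presburger
  then obtain k where "x = y + 3 * k + 1 \<or> x = y + 3 * k + 2" by blast
  ultimately show ?thesis
    using assms by (cases rule: chamber_cases) ((auto simp: walk_simps), presburger+)
qed

lemma hexagonal_GC_side_0:
  assumes "l \<ge> 1" "is_map P" "f \<in> flags P" "c \<in> gc_tri l 0" "fst c = (t, t)" "0 < t"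
  shows "exact_period (rot (GC l 0 P) 0 1) 6 (f, c)"
proof -
  have "is_chamber c" using assms(4) by (simp add: gc_tri_def)
  then show ?thesis
    using assms by (cases rule: chamber_cases) ((auto simp: walk_simps), presburger+)
qed

lemma hexagonal_GC_side_1:
  assumes "l \<ge> 1" "is_map P" "f \<in> flags P" "c \<in> gc_tri l 0" "fst c = (x, 0)" "0 < x" "x < int l"
  shows "exact_period (rot (GC l 0 P) 0 1) 6 (f, c)"
proof -
  have "is_chamber c" using assms(4) by (simp add: gc_tri_def)
  moreover have "\<exists>k. x = 3 * k"
    using face_coords_mod_3[OF \<open>is_chamber c\<close> assms(5)] by presburger
  then obtain k where "x = 3 * k" by blast
  ultimately show ?thesis
    using assms by (cases rule: chamber_cases) ((auto simp: walk_simps), presburger+)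
qed

lemma hexagonal_GC_side_2:
  assumes "l \<ge> 1" "is_map P" "f \<in> flags P" "c \<in> gc_tri l 0" "fst c = (x, y)"
    "x + y = int l" "0 < y" "y < x"
  shows "exact_period (rot (GC l 0 P) 0 1) 6 (f, c)"
proof -
  have "is_chamber c" using assms(4) by (simp add: gc_tri_def)
  moreover have "\<exists>k. x = y + 3 * k"
    using face_coords_mod_3[OF \<open>is_chamber c\<close> assms(5)] by presburger
  then obtain k where "x = y + 3 * k" by blast
  ultimately show ?thesis
    using assms by (cases rule: chamber_cases) (auto simp: walk_simps)
qed

lemma trivalent_GC:
  assumes "l \<ge> 1" "\<not> 3 dvd l" "is_map P" "f \<in> flags P" "c \<in> gc_tri l 0" "c \<noteq> chamber_v0 l"
  shows "exact_period (rot (GC l 0 P) 1 2) 3 (f, c)"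
proof -
  obtain x y where V: "fst (snd c) = (x, y)" by force
  have "0 \<le> y" "y \<le> x" "x + y \<le> int l" using gc_tri_corner_bounds(2)[OF assms(1,5) V] by auto
  moreover have "x \<noteq> y"
    using vertex_not_face[OF _ V] assms(5) by (auto simp: gc_tri_def)
  ultimately consider "y = 0" "x < int l" | "0 < y" "y < x" "x + y < int l" | "0 < y" "x + y = int l"
    using chamber_v0_unique[OF assms(1,2,5)] V assms(6) by fastforce
  then show ?thesis
  proof cases
    case 1
    then show ?thesis using trivalent_GC_side_1[OF assms(1,3,4,5)] V by simp
  next
    case 2
    then show ?thesis using trivalent_GC_interior[OF assms(1,5) V] by simp
  next
    case 3
    then show ?thesis using trivalent_GC_side_2[OF assms(1,3,4,5) V] by simp
  qed
qed

lemma hexagonal_GC: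
  assumes "l \<ge> 1" "\<not> 3 dvd l" "is_map P" "f \<in> flags P" "c \<in> gc_tri l 0" "c \<noteq> chamber_v2"
  shows "exact_period (rot (GC l 0 P) 0 1) 6 (f, c)"
proof -
  obtain x y where F: "fst c = (x, y)" by force
  have "0 \<le> y" "y \<le> x" "x + y \<le> int l" using gc_tri_corner_bounds(1)[OF assms(1,5) F] by auto
  moreover have "(x - y) mod 3 = 0"
    using face_coords_mod_3[OF _ F] assms(5) by (auto simp: gc_tri_def)
  moreover have "\<not> (x = 0 \<and> y = 0)" using chamber_v2_unique[OF assms(1,5)] F assms(6) by auto
  moreover have "int l mod 3 \<noteq> 0" using assms(2) by presburger
  ultimately have "x = y \<and> 0 < x \<or> y = 0 \<and> 0 < x \<and> x < int l
    \<or> 0 < y \<and> y + 3 \<le> x \<and> x + y < int l \<or> 0 < y \<and> y < x \<and> x + y = int l"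
    by presburger
  then consider "x = y" "0 < x" | "y = 0" "0 < x" "x < int l"
    | "0 < y" "y + 3 \<le> x" "x + y < int l" | "0 < y" "y < x" "x + y = int l"
    by blast
  then show ?thesis
  proof cases
    case 1
    then show ?thesis using hexagonal_GC_side_0[OF assms(1,3,4,5)] F by simp
  next
    case 2
    then show ?thesis using hexagonal_GC_side_1[OF assms(1,3,4,5)] F by simp
  next
    case 3
    then show ?thesis using hexagonal_GC_interior[OF assms(1,5) F] by simp
  next
    case 4
    then show ?thesis using hexagonal_GC_side_2[OF assms(1,3,4,5) F] by simp
  qed
qed

lemma rf_GC_chamber_v2:
  assumes "l \<ge> 1" "i < 2"
  shows "rf (GC l 0 P) i (f, chamber_v2) = (rf P i f, chamber_v2)"
  using assms chamber_v2_boundary[OF assms(1)] by (auto simp: rf_GC less_2_cases_iff)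

lemma rf_GC_chamber_v0:
  assumes "l \<ge> 1" "\<not> 3 dvd l"
  shows "rf (GC l 0 P) 1 (f, chamber_v0 l) = (rf P (if int l mod 3 = 1 then 1 else 2) f, chamber_v0 l)"
    and "rf (GC l 0 P) 2 (f, chamber_v0 l) = (rf P (if int l mod 3 = 1 then 2 else 1) f, chamber_v0 l)"
  using chamber_v0_boundary[OF assms] by (simp_all add: rf_GC)

lemma rf_P_inside_GC:
  assumes l: "l \<ge> 1" "\<not> 3 dvd l" and i: "i < 3"
  obtains c j where "c \<in> gc_tri l 0" "j < 3" "\<And>g. rf (GC l 0 P) j (g, c) = (rf P i g, c)"
proof (cases "i < 2")
  case True
  show thesis
  proof (rule that[OF chamber_v2_in_gc_tri[OF l(1)]])
    show "rf (GC l 0 P) i (g, chamber_v2) = (rf P i g, chamber_v2)" for g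
      by (rule rf_GC_chamber_v2[OF l(1) True])
  qed (use True in simp)
next
  case False
  then have "i = 2" using i by simp
  show thesis
  proof (rule that[OF chamber_v0_in_gc_tri[OF l]])
    show "rf (GC l 0 P) (if int l mod 3 = 1 then 2 else 1) (g, chamber_v0 l) = (rf P i g, chamber_v0 l)" for g
      using rf_GC_chamber_v0[OF l, where P = P and f = g] \<open>i = 2\<close>
      by (cases "int l mod 3 = 1") simp_all
  qed simp
qed

lemma exact_period_GC_chamber_v2:
  assumes "l \<ge> 1"
  shows "exact_period (rot (GC l 0 P) 0 1) n (f, chamber_v2) \<longleftrightarrow> exact_period (rot P 0 1) n f"
  by (rule exact_period_Pair_const) (simp add: rot_def rf_GC_chamber_v2[OF assms])

lemma exact_period_GC_chamber_v0:
  assumes "l \<ge> 1" "\<not> 3 dvd l"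
  shows "exact_period (rot (GC l 0 P) 1 2) n (f, chamber_v0 l) \<longleftrightarrow>
    exact_period (if int l mod 3 = 1 then rot P 1 2 else rot P 2 1) n f"
  by (rule exact_period_Pair_const)
    (simp add: rot_def rf_GC_chamber_v0[OF assms] rf_GC_chamber_v0(1)[OF assms, unfolded One_nat_def])

(* For l = 2 (mod 3) the chamber at v0 meets the two boundary sides in the opposite order and
   sees the vertex rotation of P reversed; conjugating by rf 1 compensates. *)
lemma irregular_flag_GC:
  assumes "l \<ge> 1" "\<not> 3 dvd l" "is_map P" "orientable P" "genus P \<noteq> 1"
  obtains f where "f \<in> flags P"
    "\<not> exact_period (rot (GC l 0 P) 1 2) 3 (f, chamber_v0 l) \<or>
     \<not> exact_period (rot (GC l 0 P) 0 1) 6 (f, chamber_v2)"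
proof -
  obtain f where f: "f \<in> flags P"
    and irregular: "\<not> exact_period (rot P 1 2) 3 f \<or> \<not> exact_period (rot P 0 1) 6 f"
    using genus_eq_1_if_trivalent_hexagonal[OF assms(3,4)] assms(5) by blast
  consider (vertex) "\<not> exact_period (rot P 1 2) 3 f" | (face) "\<not> exact_period (rot P 0 1) 6 f"
    using irregular by blast
  then show thesis
  proof cases
    case face
    then show thesis using that[OF f] exact_period_GC_chamber_v2[OF assms(1), where f = f] by blast
  next
    case vertex
    show thesis
    proof (cases "int l mod 3 = 1")
      case True
      then show thesis
        using that[OF f] vertex exact_period_GC_chamber_v0[OF assms(1,2), where f = f] by simp
    next
      case False
      have "rf P 1 f \<in> flags P" using rf_in_flags[OF assms(3) f] by simp
      moreover have "exact_period (rot P 2 1) 3 (rf P 1 f) \<longleftrightarrow> exact_period (rot P 1 2) 3 f"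
        by (rule exact_period_rot_swap[OF assms(3) _ _ f]) simp_all
      ultimately show thesis
        using that[of "rf P 1 f"] vertex False exact_period_GC_chamber_v0[OF assms(1,2), where f = "rf P 1 f"]
        by simp
    qed
  qed
qed

section \<open>Automorphisms of GC(l,0)(P)\<close>

definition lift_aut ::
    "nat \<Rightarrow> nat \<Rightarrow> 'a flagmap \<Rightarrow> ('a \<Rightarrow> 'a) \<Rightarrow> 'a \<times> chamber \<Rightarrow> 'a \<times> chamber" where
  "lift_aut l m P \<phi> x = (if x \<in> flags (GC l m P) then (\<phi> (fst x), snd x) else x)"

lemma lift_aut_in_Aut:
  assumes P: "is_map P" and \<phi>: "\<phi> \<in> Aut P"
  shows "lift_aut l m P \<phi> \<in> Aut (GC l m P)"
proof -
  let ?G = "GC l m P"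
  have "bij_betw \<phi> (flags P) (flags P)" using \<phi> by (simp add: Aut_def)
  then have "bij_betw (map_prod \<phi> id) (flags ?G) (flags ?G)"
    unfolding flags_GC by (rule bij_betw_map_prod[OF _ bij_betw_id])
  moreover have "lift_aut l m P \<phi> x = map_prod \<phi> id x" if "x \<in> flags ?G" for x
    using that by (cases x) (simp add: lift_aut_def)
  ultimately have "bij_betw (lift_aut l m P \<phi>) (flags ?G) (flags ?G)"
    using bij_betw_cong by blast
  moreover have "lift_aut l m P \<phi> (rf ?G i x) = rf ?G i (lift_aut l m P \<phi> x)"
    if i: "i < 3" and x_flags: "x \<in> flags ?G" for i x
  proof -
    obtain f c where x: "x = (f, c)" "f \<in> flags P" "c \<in> gc_tri l m"
      using x_flags by (auto simp: flags_GC)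
    have "gc_side l m c i < 3" by (simp add: gc_side_def)
    moreover have "lift_aut l m P \<phi> (rf ?G i x) = (\<phi> (fst (rf ?G i x)), snd (rf ?G i x))"
      using rf_GC_in_flags[OF P x_flags i] by (simp add: lift_aut_def)
    ultimately show ?thesis
      using Aut_rf[OF \<phi> x(2)] x x_flags by (simp add: lift_aut_def rf_GC)
  qed
  ultimately show ?thesis by (simp add: Aut_def lift_aut_def)
qed

lemma inj_on_lift_aut:
  assumes "c \<in> gc_tri l m"
  shows "inj_on (lift_aut l m P) (Aut P)"
proof (rule inj_onI)
  fix \<phi> \<phi>' assume \<phi>: "\<phi> \<in> Aut P" "\<phi>' \<in> Aut P" and eq: "lift_aut l m P \<phi> = lift_aut l m P \<phi>'"
  show "\<phi> = \<phi>'"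
  proof
    fix f
    show "\<phi> f = \<phi>' f"
    proof (cases "f \<in> flags P")
      case True
      then show ?thesis
        using fun_cong[OF eq, of "(f, c)"] assms by (simp add: lift_aut_def flags_GC)
    qed (use \<phi> in \<open>simp add: Aut_def\<close>)
  qed
qed

lemma flags_GC_subset_closed:
  assumes l: "l \<ge> 1" "\<not> 3 dvd l" and P: "is_map P"
    and x: "x \<in> S" "x \<in> flags (GC l 0 P)"
    and closed: "\<And>y i. y \<in> S \<Longrightarrow> y \<in> flags (GC l 0 P) \<Longrightarrow> i < 3 \<Longrightarrow> rf (GC l 0 P) i y \<in> S"
  shows "flags (GC l 0 P) \<subseteq> S"
proof -
  have in_S_iff: "(g, c) \<in> S \<longleftrightarrow> (g, chamber_v2) \<in> S" if "g \<in> flags P" "c \<in> gc_tri l 0" for g c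
  proof (rule gc_tri_invariant_iff[OF l(1) that(2)])
    fix c i assume "c \<in> gc_tri l 0" "i < 3" "cref i c \<in> gc_tri l 0" "(g, c) \<in> S"
    then show "(g, cref i c) \<in> S" using closed[of "(g, c)" i] that(1) by (simp add: rf_GC flags_GC)
  qed
  have across: "(rf P i g, chamber_v2) \<in> S"
    if g_S: "(g, chamber_v2) \<in> S" and g: "g \<in> flags P" and i: "i < 3" for g i
  proof -
    obtain c j where c: "c \<in> gc_tri l 0" "j < 3" "rf (GC l 0 P) j (g, c) = (rf P i g, c)"
      using rf_P_inside_GC[OF l i] by metis
    then have "(rf P i g, c) \<in> S"
      using closed[of "(g, c)" j] in_S_iff[OF g c(1)] g_S g by (simp add: flags_GC)
    then show ?thesis using in_S_iff[OF rf_in_flags[OF P g i] c(1)] by simp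
  qed
  obtain g0 c0 where "x = (g0, c0)" "g0 \<in> flags P" "c0 \<in> gc_tri l 0"
    using x(2) by (auto simp: flags_GC)
  then have "(g0, chamber_v2) \<in> S" using in_S_iff x(1) by blast
  have "(g, chamber_v2) \<in> S" if "g \<in> flags P" for g
    using flags_connected[OF P \<open>g0 \<in> flags P\<close> that]
  proof (induction rule: rtranclp_induct)
    case (step y z)
    then obtain i where "i \<in> {0,1,2}" "z = rf P i y" by (auto simp: step_rel_def)
    moreover have "y \<in> flags P"
      using reachable_flags_symmetric[OF P _ \<open>g0 \<in> flags P\<close> step.hyps(1)] by simp
    ultimately show ?case using across[OF step.IH] by auto
  qed fact
  then show ?thesis using in_S_iff by (auto simp: flags_GC)
qed

lemma Aut_GC_label_rf:
  assumes \<psi>: "\<psi> \<in> Aut (GC l m P)" and y: "y \<in> flags (GC l m P)" "snd (\<psi> y) = snd y" and i: "i < 3"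
  shows "snd (\<psi> (rf (GC l m P) i y)) = snd (rf (GC l m P) i y)"
proof -
  obtain g c g' where "y = (g, c)" "\<psi> y = (g', c)" using y(2) by (metis prod.collapse)
  then show ?thesis using Aut_rf[OF \<psi> y(1) i] by (simp add: rf_GC)
qed

lemma Aut_GC_label_of_irregular_flag:
  assumes \<psi>: "\<psi> \<in> Aut (GC l m P)" and P: "is_map P" and fc: "(f, c) \<in> flags (GC l m P)"
    and ab: "a < 3" "b < 3" and irregular: "\<not> exact_period (rot (GC l m P) a b) n (f, c)"
    and regular: "\<And>g c'. g \<in> flags P \<Longrightarrow> c' \<in> gc_tri l m \<Longrightarrow> c' \<noteq> c \<Longrightarrow>
      exact_period (rot (GC l m P) a b) n (g, c')"
  shows "snd (\<psi> (f, c)) = c"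
proof -
  obtain g c' where \<psi>_fc: "\<psi> (f, c) = (g, c')" by (cases "\<psi> (f, c)")
  have "(g, c') \<in> flags (GC l m P)" using Aut_in_flags[OF \<psi> fc] \<psi>_fc by simp
  moreover have "\<not> exact_period (rot (GC l m P) a b) n (g, c')"
    using irregular Aut_exact_period_iff[OF rf_GC_in_flags[OF P] \<psi> ab fc] \<psi>_fc by simp
  ultimately show ?thesis using regular[of g c'] \<psi>_fc by (auto simp: flags_GC)
qed

lemma Aut_GC_preserves_labels:
  assumes l: "l \<ge> 1" "\<not> 3 dvd l" and P: "is_map P" "orientable P" "genus P \<noteq> 1"
    and \<psi>: "\<psi> \<in> Aut (GC l 0 P)" and x: "x \<in> flags (GC l 0 P)"
  shows "snd (\<psi> x) = snd x"
proof -
  let ?G = "GC l 0 P"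
  define S where "S = {x \<in> flags ?G. snd (\<psi> x) = snd x}"
  obtain f where f: "f \<in> flags P"
    and "\<not> exact_period (rot ?G 1 2) 3 (f, chamber_v0 l) \<or> \<not> exact_period (rot ?G 0 1) 6 (f, chamber_v2)"
    using irregular_flag_GC[OF l P] by blast
  moreover have "(f, chamber_v0 l) \<in> S" if "\<not> exact_period (rot ?G 1 2) 3 (f, chamber_v0 l)"
  proof -
    have "(f, chamber_v0 l) \<in> flags ?G" using f chamber_v0_in_gc_tri[OF l] by (simp add: flags_GC)
    then show ?thesis
      using Aut_GC_label_of_irregular_flag[OF \<psi> P(1) _ _ _ that trivalent_GC[OF l P(1)]]
      by (simp add: S_def)
  qed
  moreover have "(f, chamber_v2) \<in> S" if "\<not> exact_period (rot ?G 0 1) 6 (f, chamber_v2)"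
  proof -
    have "(f, chamber_v2) \<in> flags ?G" using f chamber_v2_in_gc_tri[OF l(1)] by (simp add: flags_GC)
    then show ?thesis
      using Aut_GC_label_of_irregular_flag[OF \<psi> P(1) _ _ _ that hexagonal_GC[OF l P(1)]]
      by (simp add: S_def)
  qed
  ultimately have "(f, chamber_v0 l) \<in> S \<or> (f, chamber_v2) \<in> S" by blast
  then obtain y where "y \<in> S" by blast
  then have "flags ?G \<subseteq> S"
  proof (rule flags_GC_subset_closed[OF l P(1)])
    show "y \<in> flags ?G" using \<open>y \<in> S\<close> by (simp add: S_def)
  qed (use Aut_GC_label_rf[OF \<psi>] rf_GC_in_flags[OF P(1)] in \<open>simp add: S_def\<close>)
  then show ?thesis using x by (auto simp: S_def)
qed

lemma Aut_GC_same_on_all_chambers: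
  assumes l: "l \<ge> 1" and \<psi>: "\<psi> \<in> Aut (GC l 0 P)"
    and labels: "\<And>x. x \<in> flags (GC l 0 P) \<Longrightarrow> snd (\<psi> x) = snd x"
    and f: "f \<in> flags P" and c: "c \<in> gc_tri l 0"
  shows "\<psi> (f, c) = (fst (\<psi> (f, chamber_v2)), c)"
proof -
  have "fst (\<psi> (f, c)) = fst (\<psi> (f, chamber_v2))"
  proof (rule gc_tri_invariant_iff[OF l c, THEN iffD2])
    fix c' i assume c': "c' \<in> gc_tri l 0" "i < 3" "cref i c' \<in> gc_tri l 0"
      and same: "fst (\<psi> (f, c')) = fst (\<psi> (f, chamber_v2))"
    have fc': "(f, c') \<in> flags (GC l 0 P)" using f c' by (simp add: flags_GC)
    then have "snd (\<psi> (f, c')) = c'" using labels by simp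
    then obtain g where g: "\<psi> (f, c') = (g, c')" by (metis prod.collapse)
    have "\<psi> (f, cref i c') = rf (GC l 0 P) i (\<psi> (f, c'))"
      using Aut_rf[OF \<psi> fc' c'(2)] c'(3) by (simp add: rf_GC)
    also have "\<dots> = (g, cref i c')" using g c'(3) by (simp add: rf_GC)
    finally show "fst (\<psi> (f, cref i c')) = fst (\<psi> (f, chamber_v2))" using g same by simp
  qed simp
  moreover have "snd (\<psi> (f, c)) = c" using labels f c by (simp add: flags_GC)
  ultimately show ?thesis by (simp add: prod_eq_iff)
qed

lemma Aut_GC_label_preserving_is_lift:
  assumes l: "l \<ge> 1" "\<not> 3 dvd l" and P: "is_map P" and \<psi>: "\<psi> \<in> Aut (GC l 0 P)"
    and labels: "\<And>x. x \<in> flags (GC l 0 P) \<Longrightarrow> snd (\<psi> x) = snd x"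
  shows "\<psi> \<in> lift_aut l 0 P ` Aut P"
proof -
  let ?G = "GC l 0 P"
  define \<pi> where "\<pi> f = (if f \<in> flags P then fst (\<psi> (f, chamber_v2)) else f)" for f
  have \<psi>_eq: "\<psi> (f, c) = (\<pi> f, c)" if "f \<in> flags P" "c \<in> gc_tri l 0" for f c
    using Aut_GC_same_on_all_chambers[OF l(1) \<psi> labels that] that(1) by (simp add: \<pi>_def)
  have in_flags: "(f, c) \<in> flags ?G" if "f \<in> flags P" "c \<in> gc_tri l 0" for f c
    using that by (simp add: flags_GC)
  note v2 = chamber_v2_in_gc_tri[OF l(1)]
  have "\<pi> ` flags P \<subseteq> flags P"
    using Aut_in_flags[OF \<psi> in_flags[OF _ v2]] \<psi>_eq[OF _ v2] by (auto simp: flags_GC)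
  moreover have "inj_on \<pi> (flags P)"
    using Aut_inj_iff[OF \<psi> in_flags[OF _ v2] in_flags[OF _ v2]] \<psi>_eq[OF _ v2] by (auto intro: inj_onI)
  ultimately have "bij_betw \<pi> (flags P) (flags P)"
    using P by (simp add: bij_betw_def endo_inj_surj is_map_def)
  moreover have "\<pi> (rf P i f) = rf P i (\<pi> f)" if i: "i < 3" and f: "f \<in> flags P" for i f
  proof -
    obtain c j where c: "c \<in> gc_tri l 0" "j < 3" "\<And>g. rf ?G j (g, c) = (rf P i g, c)"
      using rf_P_inside_GC[OF l i] by metis
    have "(\<pi> (rf P i f), c) = \<psi> (rf ?G j (f, c))"
      using \<psi>_eq[OF rf_in_flags[OF P f i] c(1)] c(3) by simp
    also have "\<dots> = rf ?G j (\<psi> (f, c))" using Aut_rf[OF \<psi> in_flags[OF f c(1)] c(2)] .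
    also have "\<dots> = (rf P i (\<pi> f), c)" using \<psi>_eq[OF f c(1)] c(3) by simp
    finally show ?thesis by simp
  qed
  ultimately have "\<pi> \<in> Aut P" by (simp add: Aut_def \<pi>_def)
  moreover have "\<psi> = lift_aut l 0 P \<pi>"
  proof
    fix x
    show "\<psi> x = lift_aut l 0 P \<pi> x"
      using \<psi>_eq \<psi> by (cases x) (auto simp: lift_aut_def flags_GC Aut_def)
  qed
  ultimately show ?thesis by blast
qed

theorem lemma10:
  fixes P :: "'a flagmap" and l :: nat
  assumes "polyhedral P"
    and "genus P \<noteq> 1"
    and "l \<ge> 1"
    and "\<not> 3 dvd l"
  shows "card (Aut (GC l 0 P)) = card (Aut P)"
proof -
  have P: "is_map P" "orientable P" using assms(1) by (simp_all add: polyhedral_def)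
  have "Aut (GC l 0 P) = lift_aut l 0 P ` Aut P"
    using lift_aut_in_Aut[OF P(1)] Aut_GC_label_preserving_is_lift[OF assms(3,4) P(1)]
      Aut_GC_preserves_labels[OF assms(3,4) P assms(2)] by blast
  moreover have "inj_on (lift_aut l 0 P) (Aut P)"
    using inj_on_lift_aut chamber_v2_in_gc_tri[OF assms(3)] by blast
  ultimately show ?thesis by (simp add: card_image)
qed

end
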